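(* Let $R$ be a (not necessarily unital) ring, or a (not necessarily unital) $K$-algebra. Then $R$ is locally unit-regular as a ring (respectively, as an algebra) if and only if $R$ is von Neumann regular and $eRe$ is unit-regular for every idempotent $e \in R$.
   Context: A ring $R$ is (von Neumann) regular if for each $x\in R$ there is $y\in R$ with $xyx=x$. A unital ring $S$ is unit-regular if for each $x\in S$ there is a unit $u$ of $S$ with $xux = x$. A ring (resp. $K$-algebra) $R$ is locally unit-regular if every finite subset of $R$ is contained in a subring (resp. $K$-subalgebra) of $R$ that has its own identity element (not necessarily equal to any identity of $R$) and is unit-regular. *)

theory Defs
  imports Complex_Main
begin

text \<open>The (not necessarily unital) ring R is the whole carrier type of class ring.\<close>

definition vn_regular :: "'a::ring itself \<Rightarrow> bool" where
  "vn_regular _ \<longleftrightarrow> (\<forall>x::'a. \<exists>y. x * y * x = x)"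

definition unit_regular_on :: "'a::ring set \<Rightarrow> 'a \<Rightarrow> bool" where
  "unit_regular_on S u \<longleftrightarrow>
     (\<forall>x\<in>S. \<exists>v\<in>S. \<exists>w\<in>S. v * w = u \<and> w * v = u \<and> x * v * x = x)"

definition unital_subring :: "'a::ring set \<Rightarrow> 'a \<Rightarrow> bool" where
  "unital_subring S u \<longleftrightarrow>
     0 \<in> S \<and> (\<forall>x\<in>S. \<forall>y\<in>S. x + y \<in> S \<and> x * y \<in> S) \<and> (\<forall>x\<in>S. - x \<in> S) \<and>
     u \<in> S \<and> (\<forall>x\<in>S. u * x = x \<and> x * u = x)"

definition locally_unit_regular :: "'a::ring itself \<Rightarrow> bool" where
  "locally_unit_regular _ \<longleftrightarrow>
     (\<forall>F::'a set. finite F \<longrightarrow>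
        (\<exists>S u. F \<subseteq> S \<and> unital_subring S u \<and> unit_regular_on S u))"

definition algebra_over :: "('k::field \<Rightarrow> 'a::ring \<Rightarrow> 'a) \<Rightarrow> bool" where
  "algebra_over scale \<longleftrightarrow> Modules.module scale \<and>
     (\<forall>c x y. scale c (x * y) = scale c x * y \<and> scale c (x * y) = x * scale c y)"

definition locally_unit_regular_alg :: "('k::field \<Rightarrow> 'a::ring \<Rightarrow> 'a) \<Rightarrow> bool" where
  "locally_unit_regular_alg scale \<longleftrightarrow>
     (\<forall>F::'a set. finite F \<longrightarrow>
        (\<exists>S u. F \<subseteq> S \<and> unital_subring S u \<and> (\<forall>c. \<forall>x\<in>S. scale c x \<in> S) \<and>
               unit_regular_on S u))"

definition corner :: "'a::ring \<Rightarrow> 'a set" where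
  "corner e = {e * r * e | r. True}"

end

theory Submission
  imports Defs
begin

text \<open>If R is regular, every finite subset lies in a corner eRe: an idempotent e can be
  enlarged to an idempotent absorbing a given element x from the left by adding an idempotent
  generator p of the principal right ideal (x - ex)R, and similarly on the right. The corner eRe is a
  subring with identity e (and a subalgebra), unit-regular by hypothesis.

  Conversely, let x lie in eRe with reflexive inverse y there, and let S be a unit-regular subring
  with identity u containing e and x. If a unit t of S satisfies ata = a, then for every inner
  inverse b of a the idempotents u - ab and u - ba are equivalent, through u - at and u - ta. Taking
  a = (u - e) + x and b = (u - e) + y gives e - xy \<sim> e - yx, and an equivalence A, B between them
  turns y into the unit y + B of eRe with inverse x + A.\<close>

lemma corner_iff:
  fixes e x :: "'a::ring"
  assumes "e * e = e"
  shows "x \<in> corner e \<longleftrightarrow> e * x = x \<and> x * e = x"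
proof
  assume "x \<in> corner e"
  then obtain r where "x = e * r * e" by (auto simp: corner_def)
  then show "e * x = x \<and> x * e = x" using assms by (metis mult.assoc)
next
  assume "e * x = x \<and> x * e = x"
  then have "x = e * x * e" by simp
  then show "x \<in> corner e" by (auto simp: corner_def)
qed

lemma corner_absorb:
  fixes e x :: "'a::ring"
  assumes "e * e = e" and "x \<in> corner e"
  shows "e * x = x" "x * e = x" "e * (x * w) = x * w" "x * (e * w) = x * w"
  using assms by (auto simp: corner_iff simp flip: mult.assoc)

lemma idempotent_in_corner:
  fixes e :: "'a::ring"
  assumes "e * e = e"
  shows "e \<in> corner e"
  using assms by (simp add: corner_iff)

lemma corner_subset:
  fixes e f :: "'a::ring"
  assumes f: "f * f = f" and e: "e \<in> corner f"
  shows "corner e \<subseteq> corner f"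
proof
  fix x assume "x \<in> corner e"
  then obtain r where "x = e * r * e" by (auto simp: corner_def)
  then show "x \<in> corner f"
    using corner_absorb[OF f e] by (simp add: corner_iff[OF f] mult.assoc)
qed

lemma unital_subring_corner:
  fixes e :: "'a::ring"
  assumes "e * e = e"
  shows "unital_subring (corner e) e"
  unfolding unital_subring_def
proof (intro conjI ballI)
  show "0 \<in> corner e" "e \<in> corner e"
    using assms by (simp_all add: corner_iff)
  fix x assume x: "x \<in> corner e"
  show "e * x = x" "x * e = x" "- x \<in> corner e"
    using assms x by (simp_all add: corner_iff)
  fix y assume y: "y \<in> corner e"
  show "x + y \<in> corner e"
    using assms x y by (simp add: corner_iff algebra_simps)
  have "e * (x * y) = (e * x) * y" "(x * y) * e = x * (y * e)"
    by (simp_all add: mult.assoc)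
  then show "x * y \<in> corner e"
    using assms x y by (simp add: corner_iff)
qed

lemma corner_closed_scale:
  fixes scale :: "'k::field \<Rightarrow> 'a::ring \<Rightarrow> 'a"
  assumes "algebra_over scale" and "x \<in> corner e"
  shows "scale c x \<in> corner e"
proof -
  obtain r where "x = e * r * e"
    using assms(2) by (auto simp: corner_def)
  then have "scale c x = e * scale c r * e"
    using assms(1) unfolding algebra_over_def by metis
  then show ?thesis
    by (auto simp: corner_def)
qed

lemma unital_subring_closed:
  fixes S :: "'a::ring set"
  assumes "unital_subring S u" "x \<in> S" "y \<in> S"
  shows "x + y \<in> S" "x * y \<in> S" "x - y \<in> S"
  using assms unfolding unital_subring_def by (simp_all, metis diff_conv_add_uminus)

lemma unital_subring_subset_corner:
  fixes S :: "'a::ring set"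
  assumes "unital_subring S u"
  shows "u * u = u" "S \<subseteq> corner u"
  using assms unfolding unital_subring_def by (auto simp: corner_iff)

lemma regular_idempotent_extend_left:
  fixes e x :: "'a::ring"
  assumes regular: "vn_regular TYPE('a)" and e: "e * e = e"
  obtains f where "f * f = f" "e \<in> corner f" "f * x = x"
proof -
  define z where "z = x - e * x"
  obtain z' where "z * z' * z = z"
    using regular unfolding vn_regular_def by blast
  define p where "p = z * z'"
  have e': "e * (e * w) = e * w" for w
    using e by (simp add: mult.assoc[symmetric])
  have "e * z = 0"
    unfolding z_def by (simp add: algebra_simps e')
  then have ep: "e * p = 0" "e * (p * w) = 0" for w
    unfolding p_def by (simp_all add: mult.assoc[symmetric])
  have pz: "p * z = z"
    using \<open>z * z' * z = z\<close> unfolding p_def by simp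
  have pp: "p * p = p" "p * (p * w) = p * w" for w
    using \<open>z * z' * z = z\<close> unfolding p_def by (simp_all add: mult.assoc[symmetric])
  note simps = algebra_simps e e' ep pp
  show ?thesis
  proof (rule that[of "e + (p - p * e)"])
    show "(e + (p - p * e)) * (e + (p - p * e)) = e + (p - p * e)"
      by (simp add: simps)
    show "e \<in> corner (e + (p - p * e))"
      by (simp add: simps corner_iff e)
    have "p * x = z + p * (e * x)"
      using pz unfolding z_def by (simp add: algebra_simps)
    then show "(e + (p - p * e)) * x = x"
      by (simp add: simps) (simp add: z_def)
  qed
qed

lemma regular_idempotent_extend_right:
  fixes e x :: "'a::ring"
  assumes regular: "vn_regular TYPE('a)" and e: "e * e = e"
  obtains f where "f * f = f" "e \<in> corner f" "x * f = x"
proof -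
  define z where "z = x - x * e"
  obtain z' where "z * z' * z = z"
    using regular unfolding vn_regular_def by blast
  define p where "p = z' * z"
  have e': "e * (e * w) = e * w" for w
    using e by (simp add: mult.assoc[symmetric])
  have "z * e = 0"
    unfolding z_def by (simp add: algebra_simps e)
  then have pe: "p * e = 0" "p * (e * w) = 0" for w
    unfolding p_def by (simp_all add: mult.assoc[symmetric] mult.assoc)
  have zp: "z * p = z"
    using \<open>z * z' * z = z\<close> unfolding p_def by (simp add: mult.assoc)
  have pp: "p * p = p" "p * (p * w) = p * w" for w
    using \<open>z * z' * z = z\<close> unfolding p_def by (metis mult.assoc)+
  note simps = algebra_simps e e' pe pp
  show ?thesis
  proof (rule that[of "e + (p - e * p)"])
    show "(e + (p - e * p)) * (e + (p - e * p)) = e + (p - e * p)"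
      by (simp add: simps)
    show "e \<in> corner (e + (p - e * p))"
      by (simp add: simps corner_iff e)
    have "x * p = z + x * (e * p)"
      using zp unfolding z_def by (simp add: algebra_simps)
    then show "x * (e + (p - e * p)) = x"
      by (simp add: simps) (simp add: z_def)
  qed
qed

lemma regular_local_unit:
  fixes F :: "'a::ring set"
  assumes regular: "vn_regular TYPE('a)" and "finite F"
  obtains e where "e * e = e" "F \<subseteq> corner e"
  using \<open>finite F\<close> that
proof (induction F arbitrary: thesis rule: finite_induct)
  case empty
  show ?case by (rule empty.prems[of 0]) simp_all
next
  case (insert x F)
  obtain e where e: "e * e = e" "F \<subseteq> corner e"
    using insert.IH by blast
  obtain f where f: "f * f = f" "e \<in> corner f" "f * x = x"
    using regular_idempotent_extend_left[OF regular e(1)] by blast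
  obtain g where g: "g * g = g" "f \<in> corner g" "x * g = x"
    using regular_idempotent_extend_right[OF regular f(1)] by blast
  have "g * x = x"
    using corner_absorb(1)[OF g(1,2)] f(3) by (metis mult.assoc)
  then have "x \<in> corner g"
    using g(1,3) by (simp add: corner_iff)
  moreover have "F \<subseteq> corner g"
    using e(2) corner_subset[OF f(1,2)] corner_subset[OF g(1,2)] by blast
  ultimately show ?case
    using insert.prems g(1) by blast
qed

definition mvn_equiv :: "'a::ring \<Rightarrow> 'a \<Rightarrow> bool" where
  "mvn_equiv p q \<longleftrightarrow> (\<exists>a b. a * b = p \<and> b * a = q)"

lemma mvn_equiv_trans:
  fixes p q r :: "'a::ring"
  assumes "p * p = p" "r * r = r" "mvn_equiv p q" "mvn_equiv q r"
  shows "mvn_equiv p r"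
proof -
  obtain a b c d where ab: "a * b = p" "b * a = q" and cd: "c * d = q" "d * c = r"
    using assms(3,4) unfolding mvn_equiv_def by blast
  have "(a * c) * (d * b) = a * (c * d) * b"
    by (simp add: mult.assoc)
  also have "\<dots> = (a * b) * (a * b)"
    by (simp add: cd(1) ab(2)[symmetric] mult.assoc)
  finally have "(a * c) * (d * b) = p"
    using ab(1) assms(1) by simp
  have "(d * b) * (a * c) = d * (b * a) * c"
    by (simp add: mult.assoc)
  also have "\<dots> = (d * c) * (d * c)"
    by (simp add: ab(2) cd(1)[symmetric] mult.assoc)
  finally have "(d * b) * (a * c) = r"
    using cd(2) assms(2) by simp
  with \<open>(a * c) * (d * b) = p\<close> show ?thesis
    unfolding mvn_equiv_def by blast
qed

lemma mvn_equiv_obtain_corner_witnesses: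
  fixes p q :: "'a::ring"
  assumes "p * p = p" "q * q = q" "mvn_equiv p q"
  obtains a b where "a * b = p" "b * a = q" "p * a = a" "a * q = a" "q * b = b" "b * p = b"
proof -
  obtain a b where ab: "a * b = p" "b * a = q"
    using assms(3) unfolding mvn_equiv_def by blast
  have aba: "a * b * a = p * a" "a * b * a = a * q"
    by (simp_all add: ab(1)[symmetric] ab(2)[symmetric] mult.assoc)
  have bab: "b * a * b = q * b" "b * a * b = b * p"
    by (simp_all add: ab(1)[symmetric] ab(2)[symmetric] mult.assoc)
  show ?thesis
  proof (rule that[of "a * b * a" "b * a * b"])
    have "(a * b * a) * (b * a * b) = (a * b) * (a * b) * (a * b)"
      by (simp add: mult.assoc)
    then show "(a * b * a) * (b * a * b) = p"
      using ab(1) assms(1) by simp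
    have "(b * a * b) * (a * b * a) = (b * a) * (b * a) * (b * a)"
      by (simp add: mult.assoc)
    then show "(b * a * b) * (a * b * a) = q"
      using ab(2) assms(2) by simp
    show "p * (a * b * a) = a * b * a" "q * (b * a * b) = b * a * b"
      unfolding aba(1) bab(1) using assms(1,2) by (simp_all add: mult.assoc[symmetric])
    show "(a * b * a) * q = a * b * a" "(b * a * b) * p = b * a * b"
      unfolding aba(2) bab(2) using assms(1,2) by (simp_all add: mult.assoc)
  qed
qed

lemma mvn_equiv_complements_if_unit_inner_inverse:
  fixes u a b t s :: "'a::ring"
  assumes u: "u * u = u"
    and corner: "a \<in> corner u" "b \<in> corner u" "t \<in> corner u" "s \<in> corner u"
    and unit: "t * s = u" "s * t = u"
    and inner: "a * t * a = a" "a * b * a = a"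
  shows "mvn_equiv (u - a * b) (u - b * a)"
proof -
  have unit': "t * (s * w) = u * w" "s * (t * w) = u * w" for w
    using unit by (simp_all add: mult.assoc[symmetric])
  have inner': "a * (t * a) = a" "a * (t * (a * w)) = a * w"
    "a * (b * a) = a" "a * (b * (a * w)) = a * w" for w
    using inner by (simp_all add: mult.assoc[symmetric])
  note simps = algebra_simps u unit unit' inner' corner_absorb[OF u corner(1)]
    corner_absorb[OF u corner(2)] corner_absorb[OF u corner(3)] corner_absorb[OF u corner(4)]
    corner_absorb[OF u idempotent_in_corner[OF u]]
  have idem: "(u - a * b) * (u - a * b) = u - a * b" "(u - b * a) * (u - b * a) = u - b * a"
    "(u - t * a) * (u - t * a) = u - t * a"
    by (simp_all add: simps)
  have "mvn_equiv (u - a * b) (u - a * t)"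
    unfolding mvn_equiv_def
    by (rule exI[of _ "u - a * b"], rule exI[of _ "u - a * t"]) (simp add: simps)
  moreover have "mvn_equiv (u - a * t) (u - t * a)"
    unfolding mvn_equiv_def
    by (rule exI[of _ "(u - a * t) * s"], rule exI[of _ "t * (u - a * t)"]) (simp add: simps)
  moreover have "mvn_equiv (u - t * a) (u - b * a)"
    unfolding mvn_equiv_def
    by (rule exI[of _ "u - b * a"], rule exI[of _ "u - t * a"]) (simp add: simps)
  ultimately show ?thesis
    using idem by (metis mvn_equiv_trans)
qed

lemma unit_inner_inverse_in_corner_if_mvn_equiv:
  fixes e x y :: "'a::ring"
  assumes e: "e * e = e" and corner: "x \<in> corner e" "y \<in> corner e"
    and inverse: "x * y * x = x" "y * x * y = y"
    and equiv: "mvn_equiv (e - x * y) (e - y * x)"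
  shows "\<exists>v\<in>corner e. \<exists>w\<in>corner e. v * w = e \<and> w * v = e \<and> x * v * x = x"
proof -
  define f where "f = e - x * y"
  define g where "g = e - y * x"
  have inverse': "x * (y * x) = x" "y * (x * y) = y" "x * (y * (x * w)) = x * w"
    "y * (x * (y * w)) = y * w" for w
    using inverse by (simp_all add: mult.assoc[symmetric])
  note simps = algebra_simps e inverse'
    corner_absorb[OF e corner(1)] corner_absorb[OF e corner(2)]
  have f: "f * f = f" "e * f = f" "f * e = f" "f * x = 0" "y * f = 0"
    unfolding f_def by (simp_all add: simps)
  have g: "g * g = g" "e * g = g" "g * e = g" "g * y = 0" "x * g = 0"
    unfolding g_def by (simp_all add: simps)
  obtain A B where AB: "A * B = f" "B * A = g" "f * A = A" "A * g = A" "g * B = B" "B * f = B"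
    using mvn_equiv_obtain_corner_witnesses[OF f(1) g(1)] equiv unfolding f_def g_def by blast
  have orthogonal: "y * A = 0" "A * y = 0" "x * B = 0" "B * x = 0"
    by (metis AB(3-6) f(4,5) g(4,5) mult.assoc mult_zero_left mult_zero_right)+
  have "A \<in> corner e" "B \<in> corner e"
    unfolding corner_iff[OF e] by (metis AB(3-6) f(2,3) g(2,3) mult.assoc)+
  then have "y + B \<in> corner e" "x + A \<in> corner e"
    using corner unital_subring_corner[OF e] unfolding unital_subring_def by blast+
  moreover have "(y + B) * (x + A) = e"
    using AB(2) orthogonal by (simp add: algebra_simps g_def)
  moreover have "(x + A) * (y + B) = e"
    using AB(1) orthogonal by (simp add: algebra_simps f_def)
  moreover have "x * (y + B) * x = x"
    using inverse(1) orthogonal by (simp add: algebra_simps)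
  ultimately show ?thesis by blast
qed

lemma reflexive_inverse_in_corner:
  fixes e x q :: "'a::ring"
  assumes e: "e * e = e" and x: "x \<in> corner e" and inner: "x * q * x = x"
  defines "y \<equiv> e * q * x * q * e"
  shows "y \<in> corner e" "x * y * x = x" "y * x * y = y"
proof -
  have inner': "x * (q * x) = x" "x * (q * (x * w)) = x * w" for w
    using inner by (simp_all add: mult.assoc[symmetric])
  note simps = y_def mult.assoc e inner' corner_absorb[OF e x]
    corner_absorb[OF e idempotent_in_corner[OF e]]
  show "y \<in> corner e" "x * y * x = x" "y * x * y = y"
    by (simp_all add: simps corner_iff[OF e])
qed

lemma unit_inner_inverse_in_corner_of_unit_regular_subring:
  fixes S :: "'a::ring set"
  assumes S: "unital_subring S u" "unit_regular_on S u"
    and e: "e \<in> S" "e * e = e" and x: "x \<in> S" "x \<in> corner e"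
  shows "\<exists>v\<in>corner e. \<exists>w\<in>corner e. v * w = e \<and> w * v = e \<and> x * v * x = x"
proof -
  obtain q where "q \<in> S" "x * q * x = x"
    using S(2) x(1) unfolding unit_regular_on_def by blast
  define y where "y = e * q * x * q * e"
  have y: "y \<in> S" "y \<in> corner e" "x * y * x = x" "y * x * y = y"
    unfolding y_def
    using reflexive_inverse_in_corner[OF e(2) x(2) \<open>x * q * x = x\<close>]
    by (simp_all add: unital_subring_closed[OF S(1)] e(1) x(1) \<open>q \<in> S\<close>)
  have u: "u * u = u" "u \<in> S"
    using S(1) unfolding unital_subring_def by simp_all
  define a where "a = (u - e) + x"
  define b where "b = (u - e) + y"
  have ab: "a \<in> S" "b \<in> S"
    unfolding a_def b_def by (simp_all add: unital_subring_closed[OF S(1)] u(2) e(1) x(1) y(1))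
  then obtain t s where ts: "t \<in> S" "s \<in> S" "t * s = u" "s * t = u" "a * t * a = a"
    using S(2) unfolding unit_regular_on_def by blast
  have inverse': "x * (y * x) = x" "x * (y * (x * w)) = x * w" for w
    using y(3) by (simp_all add: mult.assoc[symmetric])
  note in_u = subsetD[OF unital_subring_subset_corner(2)[OF S(1)]]
  note simps = algebra_simps u(1) e(2) inverse'
    corner_absorb[OF e(2) x(2)] corner_absorb[OF e(2) y(2)]
    corner_absorb[OF u(1) in_u[OF e(1)]] corner_absorb[OF u(1) in_u[OF x(1)]]
    corner_absorb[OF u(1) in_u[OF y(1)]] corner_absorb[OF u(1) in_u[OF u(2)]]
    corner_absorb[OF e(2) idempotent_in_corner[OF e(2)]]
  have "a * b * a = a" "u - a * b = e - x * y" "u - b * a = e - y * x"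
    unfolding a_def b_def by (simp_all add: simps)
  then have "mvn_equiv (e - x * y) (e - y * x)"
    using mvn_equiv_complements_if_unit_inner_inverse[OF u(1), of a b t s] ab ts in_u by simp
  then show ?thesis
    using unit_inner_inverse_in_corner_if_mvn_equiv[OF e(2) x(2) y(2) y(3,4)] by blast
qed

lemma local_unit_regularity_iff_corners:
  fixes P :: "'a::ring set \<Rightarrow> bool"
  assumes corner_P: "\<And>e. e * e = e \<Longrightarrow> P (corner e)"
  shows "(\<forall>F::'a set. finite F \<longrightarrow>
            (\<exists>S u. F \<subseteq> S \<and> unital_subring S u \<and> P S \<and> unit_regular_on S u))
     \<longleftrightarrow> vn_regular TYPE('a) \<and> (\<forall>e::'a. e * e = e \<longrightarrow> unit_regular_on (corner e) e)"
    (is "?local \<longleftrightarrow> ?corners")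
proof
  assume local: ?local
  have "\<exists>y. x * y * x = x" for x :: 'a
  proof -
    obtain S u where "x \<in> S" "unit_regular_on S u"
      using local[rule_format, of "{x}"] by blast
    then show ?thesis
      unfolding unit_regular_on_def by blast
  qed
  moreover have "unit_regular_on (corner e) e" if "e * e = e" for e :: 'a
    unfolding unit_regular_on_def
  proof
    fix x assume "x \<in> corner e"
    moreover obtain S u where "{e, x} \<subseteq> S" "unital_subring S u" "unit_regular_on S u"
      using local[rule_format, of "{e, x}"] by blast
    ultimately show "\<exists>v\<in>corner e. \<exists>w\<in>corner e. v * w = e \<and> w * v = e \<and> x * v * x = x"
      using unit_inner_inverse_in_corner_of_unit_regular_subring[of S u e x] that by simp
  qed
  ultimately show ?corners
    unfolding vn_regular_def by blast
next
  assume ?corners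
  show ?local
  proof (intro allI impI)
    fix F :: "'a set" assume "finite F"
    then obtain e where "e * e = e" "F \<subseteq> corner e"
      using regular_local_unit \<open>?corners\<close> by blast
    then show "\<exists>S u. F \<subseteq> S \<and> unital_subring S u \<and> P S \<and> unit_regular_on S u"
      using unital_subring_corner corner_P \<open>?corners\<close>
      by (intro exI[of _ "corner e"] exI[of _ e]) simp
  qed
qed

theorem lemma5p1:
  fixes scale :: "'k::field \<Rightarrow> 'b::ring \<Rightarrow> 'b"
  shows "(locally_unit_regular TYPE('a::ring) \<longleftrightarrow>
           vn_regular TYPE('a) \<and>
           (\<forall>e::'a. e * e = e \<longrightarrow> unit_regular_on (corner e) e))
       \<and> (algebra_over scale \<longrightarrow>
           (locally_unit_regular_alg scale \<longleftrightarrow>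
             vn_regular TYPE('b) \<and>
             (\<forall>e::'b. e * e = e \<longrightarrow> unit_regular_on (corner e) e)))"
proof (intro conjI impI)
  show "locally_unit_regular TYPE('a::ring) \<longleftrightarrow>
      vn_regular TYPE('a) \<and> (\<forall>e::'a. e * e = e \<longrightarrow> unit_regular_on (corner e) e)"
    unfolding locally_unit_regular_def
    using local_unit_regularity_iff_corners[of "\<lambda>_. True"] by simp
  assume "algebra_over scale"
  then show "locally_unit_regular_alg scale \<longleftrightarrow>
      vn_regular TYPE('b) \<and> (\<forall>e::'b. e * e = e \<longrightarrow> unit_regular_on (corner e) e)"
    unfolding locally_unit_regular_alg_def
    by (intro local_unit_regularity_iff_corners) (simp add: corner_closed_scale)
qed

end
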